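(* Let $p$ be a prime and $s\geq 2$. Then (i) $\tau_s(1)=(0,p^{s-2},2p^{s-2},\dots,(p-1)p^{s-2})$; (ii) $\tau_s(p^iu)=p^{i-1}(u,u,\dots,u)$ ($p$ copies, computed in $\mathbb{Z}_{p^{s-1}}$) for all $i\in\{1,\dots,s-1\}$ and $u\in\{0,1,\dots,p^{s-1}-1\}$.
   Context: For $r\geq1$ and $u\in\mathbb{Z}_{p^r}$ with $p$-ary expansion $u=\sum_{i=0}^{r-1}u_ip^i$, $\phi_r(u)=(u_{r-1},\dots,u_{r-1})+(u_0,\dots,u_{r-2})Y_{r-1}\in\mathbb{Z}_p^{p^{r-1}}$, where $Y_1=(0\ 1\ \cdots\ p-1)$ and $Y_k$ is the $k\times p^k$ matrix with first $k-1$ rows $(Y_{k-1}\ \cdots\ Y_{k-1})$ ($p$ copies) and last row $(0,\dots,0,1,\dots,1,\dots,p-1,\dots,p-1)$ (blocks of length $p^{k-1}$); $\phi_1=\mathrm{id}$; $\Phi_r$ applies $\phi_r$ coordinatewise and concatenates. $\gamma_s$ is the coordinate permutation of $\mathbb{Z}_p^{p^{s-1}}$ given by $\gamma_s(\mathbf{x})_{j+ip+1}=\mathbf{x}_{jp^{s-2}+i+1}$ for $j\in\{0,\dots,p-1\}$, $i\in\{0,\dots,p^{s-2}-1\}$. The map $\tau_s:\mathbb{Z}_{p^s}\to\mathbb{Z}_{p^{s-1}}^p$ is $\tau_s(u)=\Phi_{s-1}^{-1}(\gamma_s^{-1}(\phi_s(u)))$; in (ii), $p^iu$ is computed in $\mathbb{Z}_{p^s}$.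 *)

theory Defs
  imports "HOL-Computational_Algebra.Primes"
begin

text \<open>Elements of Z_m are represented by naturals in {0..<m}; vectors over Z_m
  by lists of such naturals. Indices are 0-based.\<close>

definition pdigit :: "nat \<Rightarrow> nat \<Rightarrow> nat \<Rightarrow> nat" where
  "pdigit p u i = (u div p ^ i) mod p"

text \<open>Y p k j c: entry in row j, column c (0-based) of the k x p^k matrix Y_k,
  defined by the paper's recursion (first k-1 rows are p copies of Y_(k-1),
  last row is 0..0 1..1 ... (p-1)..(p-1) in blocks of length p^(k-1)).
  The case k = 0 is the empty matrix; Y p 1 j c = c gives Y_1 = (0 1 ... p-1).\<close>
fun Y :: "nat \<Rightarrow> nat \<Rightarrow> nat \<Rightarrow> nat \<Rightarrow> nat" where
  "Y p 0 j c = 0"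
| "Y p (Suc k) j c = (if j < k then Y p k j (c mod p ^ k) else c div p ^ k)"

definition phi :: "nat \<Rightarrow> nat \<Rightarrow> nat \<Rightarrow> nat list" where
  "phi p r u = map (\<lambda>c. (pdigit p u (r - 1) +
       (\<Sum>j<r - 1. pdigit p u j * Y p (r - 1) j c)) mod p) [0..<p ^ (r - 1)]"

definition Phi :: "nat \<Rightarrow> nat \<Rightarrow> nat list \<Rightarrow> nat list" where
  "Phi p r xs = concat (map (phi p r) xs)"

text \<open>gamma_s(x)_(j+ip+1) = x_(j p^(s-2)+i+1) (1-based); 0-based: position k = j + i p
  with j = k mod p, i = k div p receives x at j p^(s-2) + i.\<close>
definition gamma :: "nat \<Rightarrow> nat \<Rightarrow> nat list \<Rightarrow> nat list" where
  "gamma p s x = map (\<lambda>k. x ! ((k mod p) * p ^ (s - 2) + k div p)) [0..<p ^ (s - 1)]"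

text \<open>tau_s(u) = Phi_(s-1)^(-1)(gamma_s^(-1)(phi_s(u))): the vector v in Z_(p^(s-1))^p
  with Phi_(s-1)(v) = gamma_s^(-1)(phi_s(u)), i.e. gamma_s(Phi_(s-1)(v)) = phi_s(u).\<close>
definition tau :: "nat \<Rightarrow> nat \<Rightarrow> nat \<Rightarrow> nat list" where
  "tau p s u = (THE v. length v = p \<and> (\<forall>x\<in>set v. x < p ^ (s - 1)) \<and>
                        gamma p s (Phi p (s - 1) v) = phi p s u)"

end

theory Submission
  imports Defs "HOL-Number_Theory.Cong"
begin

text \<open>Entry \<open>a + p b\<close> of \<open>\<phi>\<^sub>s(u)\<close> is \<open>u\<^sub>s\<^sub>-\<^sub>1 + a u\<^sub>0 + \<Sum>\<^sub>j u\<^sub>j\<^sub>+\<^sub>1 b\<^sub>j\<close> (mod \<open>p\<close>),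
  which is entry \<open>b\<close> of \<open>\<phi>\<^sub>s\<^sub>-\<^sub>1\<close> applied to the number with digits
  \<open>u\<^sub>1, \<dots>, u\<^sub>s\<^sub>-\<^sub>2, u\<^sub>s\<^sub>-\<^sub>1 + a u\<^sub>0\<close>. Since \<open>\<gamma>\<^sub>s\<close> interleaves the \<open>p\<close> blocks of
  \<open>\<Phi>\<^sub>s\<^sub>-\<^sub>1\<close>, and \<open>\<phi>\<^sub>s\<^sub>-\<^sub>1\<close> is injective (its entries at \<open>0\<close> and \<open>p\<^sup>j\<close> recover all
  digits), the \<open>a\<close>-th coordinate of \<open>\<tau>\<^sub>s(u)\<close> is \<open>(u div p + a u\<^sub>0 p\<^sup>s\<^sup>-\<^sup>2) mod p\<^sup>s\<^sup>-\<^sup>1\<close>.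
  Both claims are the instances \<open>u = 1\<close> and \<open>u = p w\<close> of this formula.\<close>

lemma pdigit_0: "pdigit p x 0 = x mod p"
  by (simp add: pdigit_def)

lemma pdigit_Suc: "pdigit p x (Suc j) = pdigit p (x div p) j"
  by (simp add: pdigit_def div_mult2_eq)

lemma pdigit_less: "0 < p \<Longrightarrow> pdigit p x j < p"
  by (simp add: pdigit_def)

lemma pdigit_of_0 [simp]: "pdigit p 0 j = 0"
  by (simp add: pdigit_def)

lemma pdigit_mod_power:
  assumes "0 < p" and "j < k"
  shows "pdigit p (x mod p ^ k) j = pdigit p x j"
proof -
  have pk: "p ^ k = p ^ j * p ^ (k - j)"
    using assms by (simp add: power_add[symmetric])
  have "x mod p ^ k = p ^ j * (x div p ^ j mod p ^ (k - j)) + x mod p ^ j"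
    unfolding pk by (rule mod_mult2_eq)
  then have "x mod p ^ k div p ^ j = x div p ^ j mod p ^ (k - j)"
    using assms by simp
  moreover have "p dvd p ^ (k - j)"
    using assms by simp
  ultimately show ?thesis
    by (simp add: pdigit_def mod_mod_cancel)
qed

lemma pdigit_add_mult_power_less:
  assumes "0 < p" and "j < m"
  shows "pdigit p (x + K * p ^ m) j = pdigit p x j"
proof -
  have "p ^ m = p ^ (m - j) * p ^ j"
    using assms by (simp add: power_add[symmetric])
  then have shift: "x + K * p ^ m = x + (K * p ^ (m - j)) * p ^ j"
    by (metis mult.assoc)
  have "(x + K * p ^ m) div p ^ j = K * p ^ (m - j) + x div p ^ j"
    unfolding shift by (rule div_mult_self1) (use assms in simp)
  moreover have "K * p ^ (m - j) mod p = 0"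
    using assms by simp
  ultimately show ?thesis
    unfolding pdigit_def by (metis add_0 mod_add_left_eq)
qed

lemma pdigit_add_mult_power:
  assumes "0 < p"
  shows "pdigit p (x + K * p ^ m) m = (pdigit p x m + K) mod p"
proof -
  have "(x + K * p ^ m) div p ^ m = x div p ^ m + K"
    using assms by simp
  then show ?thesis
    by (simp add: pdigit_def mod_add_left_eq)
qed

lemma pdigit_power:
  assumes "1 < p"
  shows "pdigit p (p ^ j) i = (if i = j then 1 else 0)"
proof (cases i j rule: linorder_cases)
  case less
  then have "p ^ j = p ^ i * (p * p ^ (j - Suc i))"
    by (simp flip: power_Suc power_add)
  then have "p ^ j div p ^ i = p * p ^ (j - Suc i)"
    using assms by simp
  then show ?thesis
    using less by (simp add: pdigit_def)
next
  case greater
  then have "p ^ j < p ^ i"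
    using assms by (simp add: power_strict_increasing)
  then show ?thesis
    using greater by (simp add: pdigit_def)
qed (use assms in \<open>simp add: pdigit_def\<close>)

lemma eq_if_pdigits_eq:
  "1 < p \<Longrightarrow> x < p ^ r \<Longrightarrow> y < p ^ r \<Longrightarrow> (\<And>j. j < r \<Longrightarrow> pdigit p x j = pdigit p y j) \<Longrightarrow> x = y"
proof (induction r arbitrary: x y)
  case (Suc r)
  have "x div p < p ^ r" "y div p < p ^ r"
    using Suc.prems by (simp_all add: less_mult_imp_div_less mult.commute)
  moreover have "pdigit p (x div p) j = pdigit p (y div p) j" if "j < r" for j
    using Suc.prems(4)[of "Suc j"] that by (simp add: pdigit_Suc)
  ultimately have "x div p = y div p"
    using Suc by blast
  moreover have "x mod p = y mod p"
    using Suc.prems(4)[of 0] by (simp add: pdigit_0)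
  ultimately show ?case
    by (metis div_mult_mod_eq)
qed simp

lemma Y_eq_pdigit: "0 < p \<Longrightarrow> c < p ^ k \<Longrightarrow> j < k \<Longrightarrow> Y p k j c = pdigit p c j"
proof (induction k arbitrary: c)
  case (Suc k)
  show ?case
  proof (cases "j < k")
    case True
    then show ?thesis
      using Suc by (simp add: pdigit_mod_power)
  next
    case False
    then have "j = k"
      using Suc.prems by simp
    then show ?thesis
      using Suc.prems by (simp add: pdigit_def less_mult_imp_div_less mult.commute)
  qed
qed simp

lemma length_phi [simp]: "length (phi p r u) = p ^ (r - 1)"
  by (simp add: phi_def)

lemma nth_phi:
  "0 < p \<Longrightarrow> c < p ^ (r - 1) \<Longrightarrow>
    phi p r u ! c = (pdigit p u (r - 1) + (\<Sum>j<r - 1. pdigit p u j * pdigit p c j)) mod p"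
  by (simp add: phi_def Y_eq_pdigit)

lemma inj_on_phi:
  assumes p: "1 < p"
  shows "inj_on (phi p (Suc n)) {..<p ^ Suc n}"
proof (rule inj_onI)
  fix x y
  assume "x \<in> {..<p ^ Suc n}" "y \<in> {..<p ^ Suc n}" and eq: "phi p (Suc n) x = phi p (Suc n) y"
  have p0: "0 < p"
    using p by simp
  have top: "pdigit p x n = pdigit p y n"
    using arg_cong[OF eq, of "\<lambda>xs. xs ! 0"] p0 by (simp add: nth_phi pdigit_less)
  have low: "pdigit p x j = pdigit p y j" if j: "j < n" for j
  proof -
    have entry: "phi p (Suc n) z ! (p ^ j) = (pdigit p z n + pdigit p z j) mod p" for z
      by (subst nth_phi[OF p0]) (use p j in \<open>simp_all add: pdigit_power if_distrib cong: if_cong\<close>)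
    have "(pdigit p x n + pdigit p x j) mod p = (pdigit p y n + pdigit p y j) mod p"
      using eq by (simp flip: entry)
    then have "pdigit p x j mod p = pdigit p y j mod p"
      using top by (metis cong_def cong_add_lcancel_nat)
    then show ?thesis
      using p0 by (simp add: pdigit_less)
  qed
  show "x = y"
    by (rule eq_if_pdigits_eq[OF p, of x "Suc n" y])
      (use \<open>x \<in> _\<close> \<open>y \<in> _\<close> low top in \<open>auto elim: less_SucE\<close>)
qed

lemma nth_concat_equal_length:
  "(\<And>x. x \<in> set xs \<Longrightarrow> length x = q) \<Longrightarrow> i < length xs \<Longrightarrow> j < q \<Longrightarrow>
    concat xs ! (i * q + j) = xs ! i ! j"
proof (induction xs arbitrary: i)
  case (Cons x xs)
  then show ?case
    by (cases i) (auto simp: nth_append)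
qed simp

lemma length_gamma [simp]: "length (gamma p s x) = p ^ (s - 1)"
  by (simp add: gamma_def)

lemma index_less_power: "a < (p::nat) \<Longrightarrow> b < p ^ m \<Longrightarrow> a + p * b < p ^ Suc m"
proof -
  assume "a < p" "b < p ^ m"
  then have "a + p * b < p * Suc b" by simp
  also have "\<dots> \<le> p * p ^ m" using \<open>b < p ^ m\<close> by (intro mult_left_mono) auto
  finally show ?thesis by simp
qed

lemma nth_gamma_Phi:
  assumes "length v = p" and "a < p" and "b < p ^ m"
  shows "gamma p (Suc (Suc m)) (Phi p (Suc m) v) ! (a + p * b) = phi p (Suc m) (v ! a) ! b"
proof -
  have "gamma p (Suc (Suc m)) (Phi p (Suc m) v) ! (a + p * b) = Phi p (Suc m) v ! (a * p ^ m + b)"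
    using assms index_less_power[of a p b m] by (simp add: gamma_def)
  also have "\<dots> = phi p (Suc m) (v ! a) ! b"
    unfolding Phi_def using assms by (subst nth_concat_equal_length[where q = "p ^ m"]) auto
  finally show ?thesis .
qed

lemma gamma_Phi_eqD:
  assumes p: "1 < p" and len: "length v = p" "length w = p"
    and bounded: "\<forall>x\<in>set v. x < p ^ Suc m" "\<forall>x\<in>set w. x < p ^ Suc m"
    and eq: "gamma p (Suc (Suc m)) (Phi p (Suc m) v) = gamma p (Suc (Suc m)) (Phi p (Suc m) w)"
  shows "v = w"
proof (rule nth_equalityI)
  show "length v = length w"
    using len by simp
  fix a
  assume "a < length v"
  then have a: "a < p"
    using len by simp
  have "phi p (Suc m) (v ! a) = phi p (Suc m) (w ! a)"
  proof (rule nth_equalityI)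
    fix b
    assume "b < length (phi p (Suc m) (v ! a))"
    then show "phi p (Suc m) (v ! a) ! b = phi p (Suc m) (w ! a) ! b"
      using arg_cong[OF eq, of "\<lambda>xs. xs ! (a + p * b)"] len a by (simp add: nth_gamma_Phi)
  qed simp
  then show "v ! a = w ! a"
    by (rule inj_onD[OF inj_on_phi[OF p]]) (use bounded len a in auto)
qed

lemma tau_eqI:
  assumes "1 < p" and "length v = p" and "\<forall>x\<in>set v. x < p ^ Suc m"
    and "gamma p (Suc (Suc m)) (Phi p (Suc m) v) = phi p (Suc (Suc m)) u"
  shows "tau p (Suc (Suc m)) u = v"
  unfolding tau_def
proof (rule the_equality)
  fix w
  assume "length w = p \<and> (\<forall>x\<in>set w. x < p ^ (Suc (Suc m) - 1)) \<and>
    gamma p (Suc (Suc m)) (Phi p (Suc (Suc m) - 1) w) = phi p (Suc (Suc m)) u"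
  then show "w = v"
    using assms gamma_Phi_eqD[of p w v m] by simp
qed (use assms in simp)

lemma nth_phi_shift:
  assumes p: "1 < p" and a: "a < p" and b: "b < p ^ m"
  shows "phi p (Suc m) ((u div p + a * (u mod p) * p ^ m) mod p ^ Suc m) ! b
    = phi p (Suc (Suc m)) u ! (a + p * b)"
proof -
  define x where "x = (u div p + a * (u mod p) * p ^ m) mod p ^ Suc m"
  have p0: "0 < p"
    using p by simp
  have low: "pdigit p x j = pdigit p u (Suc j)" if "j < m" for j
  proof -
    have "pdigit p x j = pdigit p (u div p + a * (u mod p) * p ^ m) j"
      unfolding x_def using p0 that by (intro pdigit_mod_power) auto
    also have "\<dots> = pdigit p u (Suc j)"
      using p0 that by (simp add: pdigit_add_mult_power_less pdigit_Suc)
    finally show ?thesis .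
  qed
  have top: "pdigit p x m = (pdigit p u (Suc m) + a * pdigit p u 0) mod p"
  proof -
    have "pdigit p x m = pdigit p (u div p + a * (u mod p) * p ^ m) m"
      unfolding x_def using p0 by (intro pdigit_mod_power) auto
    also have "\<dots> = (pdigit p u (Suc m) + a * pdigit p u 0) mod p"
      using p0 by (simp add: pdigit_add_mult_power pdigit_Suc pdigit_0)
    finally show ?thesis .
  qed
  have index_digits: "pdigit p (a + p * b) 0 = a" "pdigit p (a + p * b) (Suc j) = pdigit p b j" for j
    using a by (simp_all add: pdigit_0 pdigit_Suc)
  have "phi p (Suc m) x ! b = (pdigit p x m + (\<Sum>j<m. pdigit p x j * pdigit p b j)) mod p"
    using p0 b by (simp add: nth_phi)
  also have "\<dots> = (pdigit p u (Suc m) + a * pdigit p u 0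
      + (\<Sum>j<m. pdigit p u (Suc j) * pdigit p b j)) mod p"
    by (simp add: top low mod_add_left_eq)
  also have "\<dots> = (pdigit p u (Suc m) + (\<Sum>j<Suc m. pdigit p u j * pdigit p (a + p * b) j)) mod p"
    unfolding sum.lessThan_Suc_shift index_digits by (simp add: algebra_simps)
  also have "\<dots> = phi p (Suc (Suc m)) u ! (a + p * b)"
    using p0 index_less_power[OF a b] by (simp add: nth_phi)
  finally show ?thesis
    unfolding x_def .
qed

lemma tau_Suc_Suc:
  assumes p: "1 < p"
  shows "tau p (Suc (Suc m)) u = map (\<lambda>a. (u div p + a * (u mod p) * p ^ m) mod p ^ Suc m) [0..<p]"
    (is "_ = ?v")
proof (rule tau_eqI[OF p])
  show "gamma p (Suc (Suc m)) (Phi p (Suc m) ?v) = phi p (Suc (Suc m)) u"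
  proof (rule nth_equalityI)
    fix k
    assume "k < length (gamma p (Suc (Suc m)) (Phi p (Suc m) ?v))"
    then have "k < p ^ Suc m"
      by simp
    define a b where "a = k mod p" and "b = k div p"
    have "a < p" "b < p ^ m"
      using p \<open>k < p ^ Suc m\<close> by (simp_all add: a_def b_def less_mult_imp_div_less mult.commute)
    moreover have "k = a + p * b"
      by (simp add: a_def b_def)
    ultimately show "gamma p (Suc (Suc m)) (Phi p (Suc m) ?v) ! k = phi p (Suc (Suc m)) u ! k"
      using nth_gamma_Phi[of ?v p a b m] nth_phi_shift[OF p, of a b m u] by simp
  qed simp
qed (use p in auto)

lemma tau_Suc_Suc_1:
  assumes p: "1 < p"
  shows "tau p (Suc (Suc m)) 1 = map (\<lambda>a. a * p ^ m) [0..<p]"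
  unfolding tau_Suc_Suc[OF p]
proof (rule map_cong)
  fix a
  assume "a \<in> set [0..<p]"
  then have "a * p ^ m < p ^ Suc m"
    by simp
  then show "(1 div p + a * (1 mod p) * p ^ m) mod p ^ Suc m = a * p ^ m"
    using p by simp
qed simp

lemma tau_Suc_Suc_mult_self:
  "1 < p \<Longrightarrow> w < p ^ Suc m \<Longrightarrow> tau p (Suc (Suc m)) (p * w) = replicate p w"
  by (simp add: tau_Suc_Suc map_replicate_const)

theorem lemma4:
  fixes p s :: nat
  assumes "prime p" and "s \<ge> 2"
  shows "tau p s 1 = map (\<lambda>j. j * p ^ (s - 2)) [0..<p] \<and>
         (\<forall>i\<in>{1..s - 1}. \<forall>u<p ^ (s - 1).
           tau p s ((p ^ i * u) mod p ^ s) = replicate p ((p ^ (i - 1) * u) mod p ^ (s - 1)))"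
proof -
  have p: "1 < p"
    using assms(1) prime_gt_1_nat by blast
  obtain m where s: "s = Suc (Suc m)"
    using assms(2) by (metis add_2_eq_Suc le_Suc_ex)
  have "tau p s ((p ^ i * u) mod p ^ s) = replicate p ((p ^ (i - 1) * u) mod p ^ (s - 1))"
    if "i \<in> {1..s - 1}" for i u
  proof -
    define w where "w = (p ^ (i - 1) * u) mod p ^ Suc m"
    have "p ^ i * u = p * (p ^ (i - 1) * u)" and "p ^ s = p * p ^ Suc m"
      using that by (simp_all add: s power_eq_if)
    then have "(p ^ i * u) mod p ^ s = p * w"
      by (simp only: w_def mult_mod_right)
    moreover have "w < p ^ Suc m"
      using p by (simp add: w_def)
    ultimately have "tau p s ((p ^ i * u) mod p ^ s) = replicate p w"
      using p by (simp only: s tau_Suc_Suc_mult_self)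
    then show ?thesis
      by (simp add: s w_def)
  qed
  moreover have "tau p s 1 = map (\<lambda>j. j * p ^ (s - 2)) [0..<p]"
    using tau_Suc_Suc_1[OF p] by (simp add: s)
  ultimately show ?thesis
    by blast
qed

end
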